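(* Let $\mathbb{X}$ be a nonempty finite set of points in $\mathbb{P}^1\times\mathbb{P}^1$ and let $\mathcal{G}(I_{\mathbb{X}})=\{g_1,\dots,g_r\}$ be a minimal set of bihomogeneous generators of $I_{\mathbb{X}}$. Then there is no partition $\mathcal{G}(I_{\mathbb{X}})=A\sqcup B$ with $A\neq\emptyset$ and $B\neq\emptyset$ such that both $J=\langle A\rangle$ and $K=\langle B\rangle$ are defining ideals of (finite) sets of points in $\mathbb{P}^1\times\mathbb{P}^1$.
   Context: $R=\mathbb{C}[x_0,x_1,y_0,y_1]$ is bigraded with $\deg x_i=(1,0)$, $\deg y_i=(0,1)$. For a point $P=A\times B$ with $A=[a_0:a_1]$, $B=[b_0:b_1]$, $I_P=\langle a_1x_0-a_0x_1,\ b_1y_0-b_0y_1\rangle$; for a finite set $\mathbb{X}$ of points, $I_{\mathbb{X}}=\bigcap_{P\in\mathbb{X}}I_P$ (the defining ideal of $\mathbb{X}$). *)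

theory Defs
  imports Complex_Main "HOL-Library.Poly_Mapping"
begin

datatype var = X0 | X1 | Y0 | Y1

type_synonym poly4 = "(var \<Rightarrow>\<^sub>0 nat) \<Rightarrow>\<^sub>0 complex"

definition Var :: "var \<Rightarrow> poly4" where
  "Var v = Poly_Mapping.single (Poly_Mapping.single v 1) 1"

definition Const :: "complex \<Rightarrow> poly4" where
  "Const c = Poly_Mapping.single 0 c"

definition bideg :: "(var \<Rightarrow>\<^sub>0 nat) \<Rightarrow> nat \<times> nat" where
  "bideg m = (Poly_Mapping.lookup m X0 + Poly_Mapping.lookup m X1, Poly_Mapping.lookup m Y0 + Poly_Mapping.lookup m Y1)"

definition bihomogeneous :: "poly4 \<Rightarrow> bool" where
  "bihomogeneous f \<longleftrightarrow> (\<exists>d. \<forall>m \<in> Poly_Mapping.keys f. bideg m = d)"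

definition ideal_gen :: "poly4 set \<Rightarrow> poly4 set" where
  "ideal_gen S = {(\<Sum>g\<in>F. c g * g) | F c. finite F \<and> F \<subseteq> S}"

text \<open>A point A x B of P^1 x P^1, represented by ((a0,a1),(b0,b1)) with both
  coordinate pairs nonzero.\<close>
definition valid_point :: "(complex \<times> complex) \<times> (complex \<times> complex) \<Rightarrow> bool" where
  "valid_point P \<longleftrightarrow> fst P \<noteq> (0,0) \<and> snd P \<noteq> (0,0)"

definition point_ideal :: "(complex \<times> complex) \<times> (complex \<times> complex) \<Rightarrow> poly4 set" where
  "point_ideal P = (case P of ((a0,a1),(b0,b1)) \<Rightarrow>
     ideal_gen {Const a1 * Var X0 - Const a0 * Var X1, Const b1 * Var Y0 - Const b0 * Var Y1})"

definition points_ideal :: "((complex \<times> complex) \<times> (complex \<times> complex)) set \<Rightarrow> poly4 set" where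
  "points_ideal X = (\<Inter>P\<in>X. point_ideal P)"

definition is_points_ideal :: "poly4 set \<Rightarrow> bool" where
  "is_points_ideal J \<longleftrightarrow> (\<exists>Y. finite Y \<and> Y \<noteq> {} \<and> (\<forall>P\<in>Y. valid_point P) \<and> J = points_ideal Y)"

definition minimal_bihom_generators :: "poly4 set \<Rightarrow> poly4 set \<Rightarrow> bool" where
  "minimal_bihom_generators G I \<longleftrightarrow> finite G \<and> (\<forall>g\<in>G. bihomogeneous g) \<and>
     ideal_gen G = I \<and> (\<forall>H. H \<subset> G \<longrightarrow> ideal_gen H \<noteq> I)"

end

theory Submission
  imports Defs "HOL-Computational_Algebra.Polynomial"
begin

(* Let N(Y) be the number of distinct first coordinates [a0:a1] of a finite set Y of points.
   The product of the linear forms a1 x0 - a0 x1 over them lies in I_Y and has bidegree (N(Y), 0),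
   so every bihomogeneous generating set of I_Y contains a nonzero generator of bidegree (k, 0)
   with k <= N(Y).  Conversely, setting x1 = 1 turns a nonzero form of bidegree (d, 0) in I_X
   into a polynomial with a root at every affine first coordinate, of degree < d if [1:0] is a
   first coordinate; hence d >= N(X), and a form of bidegree (N(X), 0) in I_X divides every form
   of bidegree (e, 0) in I_X.  So a minimal generating set of I_X contains at most one form of
   bidegree (k, 0), whereas if it splits into A and B with <A> and <B> ideals of points, both A
   and B contain one. *)

section \<open>Ideals generated by a set\<close>

lemma ideal_gen_mult_generator: "g \<in> S \<Longrightarrow> r * g \<in> ideal_gen S"
  unfolding ideal_gen_def by (intro CollectI exI[of _ "{g}"] exI[of _ "\<lambda>_. r"]) auto

lemma generator_in_ideal_gen: "g \<in> S \<Longrightarrow> g \<in> ideal_gen S"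
  using ideal_gen_mult_generator[of g S 1] by simp

lemma zero_in_ideal_gen: "0 \<in> ideal_gen S"
  unfolding ideal_gen_def by (intro CollectI exI[of _ "{}"]) auto

lemma ideal_gen_add:
  assumes "f \<in> ideal_gen S" "h \<in> ideal_gen S"
  shows "f + h \<in> ideal_gen S"
proof -
  obtain F c where F: "f = (\<Sum>g\<in>F. c g * g)" "finite F" "F \<subseteq> S"
    using assms(1) unfolding ideal_gen_def by blast
  obtain H d where H: "h = (\<Sum>g\<in>H. d g * g)" "finite H" "H \<subseteq> S"
    using assms(2) unfolding ideal_gen_def by blast
  define e where "e g = (if g \<in> F then c g else 0) + (if g \<in> H then d g else 0)" for g
  have "(\<Sum>g\<in>F \<union> H. e g * g) =
      (\<Sum>g\<in>F \<union> H. if g \<in> F then c g * g else 0) + (\<Sum>g\<in>F \<union> H. if g \<in> H then d g * g else 0)"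
    unfolding sum.distrib[symmetric] by (rule sum.cong) (auto simp: e_def algebra_simps)
  also have "\<dots> = f + h"
    using F H by (simp add: sum.If_cases Int_absorb1 Int_absorb2)
  finally show ?thesis
    unfolding ideal_gen_def using F H by (intro CollectI exI[of _ "F \<union> H"] exI[of _ e]) simp
qed

lemma ideal_gen_mult:
  assumes "f \<in> ideal_gen S"
  shows "r * f \<in> ideal_gen S"
proof -
  obtain F c where F: "f = (\<Sum>g\<in>F. c g * g)" "finite F" "F \<subseteq> S"
    using assms unfolding ideal_gen_def by blast
  then have "r * f = (\<Sum>g\<in>F. (r * c g) * g)"
    by (simp add: sum_distrib_left mult.assoc)
  then show ?thesis
    unfolding ideal_gen_def using F by (intro CollectI exI[of _ F] exI[of _ "\<lambda>g. r * c g"]) simp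
qed

lemma ideal_gen_sum: "(\<And>a. a \<in> A \<Longrightarrow> f a \<in> ideal_gen S) \<Longrightarrow> sum f A \<in> ideal_gen S"
  by (induction A rule: infinite_finite_induct) (auto simp: zero_in_ideal_gen intro: ideal_gen_add)

lemma ideal_gen_least:
  assumes "S \<subseteq> ideal_gen T"
  shows "ideal_gen S \<subseteq> ideal_gen T"
proof
  fix f assume "f \<in> ideal_gen S"
  then obtain F c where "f = (\<Sum>g\<in>F. c g * g)" "F \<subseteq> S"
    unfolding ideal_gen_def by blast
  then show "f \<in> ideal_gen T"
    using assms by (auto intro!: ideal_gen_sum ideal_gen_mult)
qed

lemma ideal_gen_mono: "S \<subseteq> T \<Longrightarrow> ideal_gen S \<subseteq> ideal_gen T"
  by (rule ideal_gen_least) (auto intro: generator_in_ideal_gen)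

lemma ideal_gen_Diff_multiple:
  assumes "f \<in> G" "h \<in> G" "f \<noteq> h" "f dvd h"
  shows "ideal_gen (G - {h}) = ideal_gen G"
proof
  have "h \<in> ideal_gen (G - {h})"
    using assms by (auto elim!: dvdE simp: mult.commute intro: ideal_gen_mult_generator)
  then have "G \<subseteq> ideal_gen (G - {h})"
    by (auto intro: generator_in_ideal_gen)
  then show "ideal_gen G \<subseteq> ideal_gen (G - {h})"
    by (rule ideal_gen_least)
qed (rule ideal_gen_mono, blast)

section \<open>Substituting univariate polynomials\<close>

lemma Const_mult: "Const a * Const b = Const (a * b)"
  by (simp add: Const_def mult_single)

lemma Const_zero [simp]: "Const 0 = 0" and Const_one [simp]: "Const 1 = 1"
  and Const_uminus: "Const (- c) = - Const c"
  by (simp_all add: Const_def single_uminus)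

definition eval_monomial :: "(var \<Rightarrow> 'a::comm_semiring_1) \<Rightarrow> (var \<Rightarrow>\<^sub>0 nat) \<Rightarrow> 'a" where
  "eval_monomial \<sigma> m = \<sigma> X0 ^ Poly_Mapping.lookup m X0 * \<sigma> X1 ^ Poly_Mapping.lookup m X1 *
     \<sigma> Y0 ^ Poly_Mapping.lookup m Y0 * \<sigma> Y1 ^ Poly_Mapping.lookup m Y1"

lemma eval_monomial_zero [simp]: "eval_monomial \<sigma> 0 = 1"
  by (simp add: eval_monomial_def)

lemma eval_monomial_add: "eval_monomial \<sigma> (m + n) = eval_monomial \<sigma> m * eval_monomial \<sigma> n"
  by (simp add: eval_monomial_def lookup_add power_add algebra_simps)

lemma eval_monomial_single [simp]: "eval_monomial \<sigma> (Poly_Mapping.single v 1) = \<sigma> v"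
  by (cases v) (auto simp: eval_monomial_def lookup_single)

(* Substituting into C[t] serves two purposes: constant substitutions evaluate at a point, and
   x0 := t, x1 := 1 dehomogenizes. *)
definition eval_poly4 :: "(var \<Rightarrow> complex poly) \<Rightarrow> poly4 \<Rightarrow> complex poly" where
  "eval_poly4 \<sigma> p =
     (\<Sum>m\<in>Poly_Mapping.keys p. smult (Poly_Mapping.lookup p m) (eval_monomial \<sigma> m))"

lemma eval_poly4_zero [simp]: "eval_poly4 \<sigma> 0 = 0"
  by (simp add: eval_poly4_def)

lemma eval_poly4_superset:
  assumes "finite M" "Poly_Mapping.keys p \<subseteq> M"
  shows "eval_poly4 \<sigma> p = (\<Sum>m\<in>M. smult (Poly_Mapping.lookup p m) (eval_monomial \<sigma> m))"
  unfolding eval_poly4_def using assms by (intro sum.mono_neutral_left) (auto simp: in_keys_iff)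

lemma eval_poly4_add: "eval_poly4 \<sigma> (p + q) = eval_poly4 \<sigma> p + eval_poly4 \<sigma> q"
proof -
  let ?M = "Poly_Mapping.keys p \<union> Poly_Mapping.keys q"
  have "eval_poly4 \<sigma> (p + q) =
      (\<Sum>m\<in>?M. smult (Poly_Mapping.lookup (p + q) m) (eval_monomial \<sigma> m))"
    using keys_add[of p q] by (intro eval_poly4_superset) auto
  also have "\<dots> = eval_poly4 \<sigma> p + eval_poly4 \<sigma> q"
    by (simp add: lookup_add smult_add_left sum.distrib eval_poly4_superset[of ?M])
  finally show ?thesis .
qed

lemma eval_poly4_uminus: "eval_poly4 \<sigma> (- p) = - eval_poly4 \<sigma> p"
  using eval_poly4_add[of \<sigma> "- p" p] by (simp add: eq_neg_iff_add_eq_0)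

lemma eval_poly4_diff: "eval_poly4 \<sigma> (p - q) = eval_poly4 \<sigma> p - eval_poly4 \<sigma> q"
  using eval_poly4_add[of \<sigma> p "- q"] by (simp add: eval_poly4_uminus)

lemma eval_poly4_sum: "eval_poly4 \<sigma> (sum f A) = (\<Sum>a\<in>A. eval_poly4 \<sigma> (f a))"
  by (induction A rule: infinite_finite_induct) (auto simp: eval_poly4_add)

lemma eval_poly4_single:
  "eval_poly4 \<sigma> (Poly_Mapping.single m c) = smult c (eval_monomial \<sigma> m)"
  by (simp add: eval_poly4_def)

lemma sum_single_lookup:
  "(\<Sum>m\<in>Poly_Mapping.keys p. Poly_Mapping.single m (Poly_Mapping.lookup p m)) = p"
  by (rule poly_mapping_eqI)
    (simp add: lookup_sum lookup_single when_def in_keys_iff sum.delta' Sum_any.delta)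

lemma eval_poly4_mult: "eval_poly4 \<sigma> (p * q) = eval_poly4 \<sigma> p * eval_poly4 \<sigma> q"
proof -
  let ?c = "Poly_Mapping.lookup" and ?K = "Poly_Mapping.keys"
  have "p * q = (\<Sum>m\<in>?K p. Poly_Mapping.single m (?c p m)) *
      (\<Sum>n\<in>?K q. Poly_Mapping.single n (?c q n))"
    by (simp add: sum_single_lookup)
  also have "\<dots> = (\<Sum>m\<in>?K p. \<Sum>n\<in>?K q. Poly_Mapping.single (m + n) (?c p m * ?c q n))"
    by (simp only: sum_product mult_single)
  finally have "eval_poly4 \<sigma> (p * q) = (\<Sum>m\<in>?K p. \<Sum>n\<in>?K q.
      smult (?c p m * ?c q n) (eval_monomial \<sigma> m * eval_monomial \<sigma> n))"
    by (simp add: eval_poly4_sum eval_poly4_single eval_monomial_add)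
  then show ?thesis
    by (simp add: eval_poly4_def sum_product ac_simps)
qed

lemma eval_poly4_one [simp]: "eval_poly4 \<sigma> 1 = 1"
  using eval_poly4_single[of \<sigma> 0 1] by (simp flip: single_one)

lemma eval_poly4_prod: "eval_poly4 \<sigma> (prod f A) = (\<Prod>a\<in>A. eval_poly4 \<sigma> (f a))"
  by (induction A rule: infinite_finite_induct) (auto simp: eval_poly4_mult)

lemma eval_poly4_Var [simp]: "eval_poly4 \<sigma> (Var v) = \<sigma> v"
  using eval_monomial_single[of \<sigma> v] by (simp add: Var_def eval_poly4_single)

lemma eval_poly4_Const [simp]: "eval_poly4 \<sigma> (Const c) = [:c:]"
  by (simp add: Const_def eval_poly4_single)

lemma eval_poly4_ideal_gen:
  assumes "f \<in> ideal_gen S" "\<And>g. g \<in> S \<Longrightarrow> eval_poly4 \<sigma> g = 0"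
  shows "eval_poly4 \<sigma> f = 0"
proof -
  obtain F c where "f = (\<Sum>g\<in>F. c g * g)" "F \<subseteq> S"
    using assms(1) unfolding ideal_gen_def by blast
  then show ?thesis
    using assms(2) by (simp add: eval_poly4_sum eval_poly4_mult subset_iff)
qed

definition point_subst :: "(complex \<times> complex) \<times> (complex \<times> complex) \<Rightarrow> var \<Rightarrow> complex poly" where
  "point_subst P v = [:case v of X0 \<Rightarrow> fst (fst P) | X1 \<Rightarrow> snd (fst P)
                                | Y0 \<Rightarrow> fst (snd P) | Y1 \<Rightarrow> snd (snd P):]"

lemma eval_poly4_point_ideal:
  assumes "f \<in> point_ideal P"
  shows "eval_poly4 (point_subst P) f = 0"
proof -
  obtain a0 a1 b0 b1 where P: "P = ((a0, a1), (b0, b1))"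
    by (metis prod.collapse)
  show ?thesis
    using assms unfolding P point_ideal_def
    by (auto elim!: eval_poly4_ideal_gen simp: eval_poly4_diff eval_poly4_mult point_subst_def)
qed

section \<open>Forms of bidegree (k, 0) and dehomogenization\<close>

definition x_form :: "nat \<Rightarrow> poly4 \<Rightarrow> bool" where
  "x_form k p \<longleftrightarrow> (\<forall>m\<in>Poly_Mapping.keys p. bideg m = (k, 0))"

lemma bideg_add: "bideg (m + n) = (fst (bideg m) + fst (bideg n), snd (bideg m) + snd (bideg n))"
  by (simp add: bideg_def lookup_add)

lemma x_form_zero [simp]: "x_form k 0"
  by (simp add: x_form_def)

lemma x_form_one: "x_form 0 1"
  by (simp add: x_form_def bideg_def)

lemma x_form_Const: "x_form 0 (Const c)"
  by (simp add: x_form_def Const_def bideg_def)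

lemma x_form_Var: "v \<in> {X0, X1} \<Longrightarrow> x_form 1 (Var v)"
  by (auto simp: x_form_def Var_def bideg_def lookup_single)

lemma x_form_add: "x_form k p \<Longrightarrow> x_form k q \<Longrightarrow> x_form k (p + q)"
  unfolding x_form_def using keys_add[of p q] by blast

lemma x_form_diff: "x_form k p \<Longrightarrow> x_form k q \<Longrightarrow> x_form k (p - q)"
  unfolding x_form_def using keys_add[of p "- q"] by (auto simp: in_keys_iff)

lemma x_form_sum: "(\<And>a. a \<in> A \<Longrightarrow> x_form k (f a)) \<Longrightarrow> x_form k (sum f A)"
  by (induction A rule: infinite_finite_induct) (auto intro: x_form_add)

lemma x_form_mult: "x_form k p \<Longrightarrow> x_form l q \<Longrightarrow> x_form (k + l) (p * q)"
  unfolding x_form_def using keys_mult[of p q] by (fastforce simp: bideg_add)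

lemma x_form_prod:
  "finite A \<Longrightarrow> (\<And>a. a \<in> A \<Longrightarrow> x_form (d a) (f a)) \<Longrightarrow> x_form (sum d A) (prod f A)"
  by (induction A rule: finite_induct) (auto intro: x_form_mult x_form_one)

definition x_monomial :: "nat \<Rightarrow> nat \<Rightarrow> var \<Rightarrow>\<^sub>0 nat" where
  "x_monomial i j = Poly_Mapping.single X0 i + Poly_Mapping.single X1 j"

lemma lookup_x_monomial [simp]:
  "Poly_Mapping.lookup (x_monomial i j) X0 = i" "Poly_Mapping.lookup (x_monomial i j) X1 = j"
  "Poly_Mapping.lookup (x_monomial i j) Y0 = 0" "Poly_Mapping.lookup (x_monomial i j) Y1 = 0"
  by (simp_all add: x_monomial_def lookup_add lookup_single)

lemma x_monomial_eq_iff: "x_monomial i j = x_monomial i' j' \<longleftrightarrow> i = i' \<and> j = j'"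
  by (metis lookup_x_monomial(1,2))

lemma bideg_x_monomial: "bideg (x_monomial i j) = (i + j, 0)"
  by (simp add: bideg_def)

lemma keys_x_form:
  assumes "x_form k p" "m \<in> Poly_Mapping.keys p"
  shows "Poly_Mapping.lookup m X0 \<le> k \<and>
    m = x_monomial (Poly_Mapping.lookup m X0) (k - Poly_Mapping.lookup m X0)"
proof -
  have m: "Poly_Mapping.lookup m X0 + Poly_Mapping.lookup m X1 = k"
    "Poly_Mapping.lookup m Y0 = 0" "Poly_Mapping.lookup m Y1 = 0"
    using assms unfolding x_form_def bideg_def by auto
  moreover have "m = x_monomial (Poly_Mapping.lookup m X0) (k - Poly_Mapping.lookup m X0)"
  proof (rule poly_mapping_eqI)
    fix v
    show "Poly_Mapping.lookup m v =
        Poly_Mapping.lookup (x_monomial (Poly_Mapping.lookup m X0) (k - Poly_Mapping.lookup m X0)) v"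
      using m by (cases v) auto
  qed
  ultimately show ?thesis by auto
qed

definition dehomogenize :: "poly4 \<Rightarrow> complex poly" where
  "dehomogenize = eval_poly4 (\<lambda>v. if v = X0 then [:0, 1:] else 1)"

lemma dehomogenize_zero [simp]: "dehomogenize 0 = 0"
  by (simp add: dehomogenize_def)

lemma dehomogenize_mult: "dehomogenize (p * q) = dehomogenize p * dehomogenize q"
  by (simp add: dehomogenize_def eval_poly4_mult)

lemma coeff_dehomogenize:
  "coeff (dehomogenize p) i =
     (\<Sum>m\<in>Poly_Mapping.keys p. if Poly_Mapping.lookup m X0 = i then Poly_Mapping.lookup p m else 0)"
  by (simp add: dehomogenize_def eval_poly4_def eval_monomial_def coeff_sum monom_altdef[symmetric])

lemma poly_dehomogenize:
  "poly (dehomogenize p) x =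
     (\<Sum>m\<in>Poly_Mapping.keys p. Poly_Mapping.lookup p m * x ^ Poly_Mapping.lookup m X0)"
  by (simp add: dehomogenize_def eval_poly4_def eval_monomial_def poly_sum poly_power)

lemma coeff_dehomogenize_x_form:
  assumes "x_form k p"
  shows "coeff (dehomogenize p) i =
    (if i \<le> k then Poly_Mapping.lookup p (x_monomial i (k - i)) else 0)"
proof -
  have "coeff (dehomogenize p) i =
      (\<Sum>m\<in>Poly_Mapping.keys p.
         if m = x_monomial i (k - i) \<and> i \<le> k then Poly_Mapping.lookup p m else 0)"
    unfolding coeff_dehomogenize
  proof (rule sum.cong)
    fix m assume "m \<in> Poly_Mapping.keys p"
    with keys_x_form[OF assms]
    have "Poly_Mapping.lookup m X0 = i \<longleftrightarrow> m = x_monomial i (k - i) \<and> i \<le> k"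
      by (metis lookup_x_monomial(1))
    then show "(if Poly_Mapping.lookup m X0 = i then Poly_Mapping.lookup p m else 0) =
        (if m = x_monomial i (k - i) \<and> i \<le> k then Poly_Mapping.lookup p m else 0)"
      by simp
  qed simp
  also have "\<dots> = (if i \<le> k then Poly_Mapping.lookup p (x_monomial i (k - i)) else 0)"
    by (auto simp: sum.delta' in_keys_iff)
  finally show ?thesis .
qed

lemma degree_dehomogenize_x_form: "x_form k p \<Longrightarrow> degree (dehomogenize p) \<le> k"
  by (rule degree_le) (simp add: coeff_dehomogenize_x_form)

lemma dehomogenize_x_form_inject:
  assumes "x_form k p" "x_form k q" "dehomogenize p = dehomogenize q"
  shows "p = q"
proof (rule poly_mapping_eqI)
  fix m
  show "Poly_Mapping.lookup p m = Poly_Mapping.lookup q m"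
  proof (cases "m \<in> Poly_Mapping.keys p \<union> Poly_Mapping.keys q")
    case True
    then have "Poly_Mapping.lookup m X0 \<le> k \<and>
        m = x_monomial (Poly_Mapping.lookup m X0) (k - Poly_Mapping.lookup m X0)"
      using keys_x_form assms(1,2) by blast
    then show ?thesis
      using assms(3) coeff_dehomogenize_x_form[OF assms(1)] coeff_dehomogenize_x_form[OF assms(2)]
      by metis
  qed (simp add: in_keys_iff)
qed

definition homogenize :: "nat \<Rightarrow> complex poly \<Rightarrow> poly4" where
  "homogenize k r = (\<Sum>i\<le>k. Poly_Mapping.single (x_monomial i (k - i)) (coeff r i))"

lemma x_form_homogenize: "x_form k (homogenize k r)"
  unfolding homogenize_def by (intro x_form_sum) (auto simp: x_form_def bideg_x_monomial)

lemma lookup_homogenize: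
  assumes "i \<le> k"
  shows "Poly_Mapping.lookup (homogenize k r) (x_monomial i (k - i)) = coeff r i"
proof -
  have "Poly_Mapping.lookup (homogenize k r) (x_monomial i (k - i)) =
      (\<Sum>j\<le>k. if j = i then coeff r i else 0)"
    unfolding homogenize_def lookup_sum
    by (intro sum.cong) (auto simp: lookup_single x_monomial_eq_iff)
  then show ?thesis
    using assms by simp
qed

lemma dehomogenize_homogenize: "degree r \<le> k \<Longrightarrow> dehomogenize (homogenize k r) = r"
  by (rule poly_eqI)
    (auto simp: coeff_dehomogenize_x_form[OF x_form_homogenize] lookup_homogenize coeff_eq_0)

lemma eval_point_x_form:
  assumes "x_form k p"
  shows "eval_poly4 (point_subst ((a0, a1), b)) p =
    [:\<Sum>m\<in>Poly_Mapping.keys p. Poly_Mapping.lookup p m * a0 ^ Poly_Mapping.lookup m X0 *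
        a1 ^ (k - Poly_Mapping.lookup m X0):]"
  unfolding eval_poly4_def sum_to_poly[symmetric]
proof (rule sum.cong)
  fix m assume "m \<in> Poly_Mapping.keys p"
  then have "Poly_Mapping.lookup m X1 = k - Poly_Mapping.lookup m X0"
    "Poly_Mapping.lookup m Y0 = 0" "Poly_Mapping.lookup m Y1 = 0"
    using assms unfolding x_form_def bideg_def by auto
  then show "smult (Poly_Mapping.lookup p m) (eval_monomial (point_subst ((a0, a1), b)) m) =
      [:Poly_Mapping.lookup p m * a0 ^ Poly_Mapping.lookup m X0 *
          a1 ^ (k - Poly_Mapping.lookup m X0):]"
    by (simp add: eval_monomial_def point_subst_def poly_const_pow)
qed simp

lemma poly_dehomogenize_point_ideal:
  assumes "x_form k p" "p \<in> point_ideal ((a0, a1), b)" "a1 \<noteq> 0"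
  shows "poly (dehomogenize p) (a0 / a1) = 0"
proof -
  have "a1 ^ k * poly (dehomogenize p) (a0 / a1) =
      (\<Sum>m\<in>Poly_Mapping.keys p. Poly_Mapping.lookup p m * a0 ^ Poly_Mapping.lookup m X0 *
        a1 ^ (k - Poly_Mapping.lookup m X0))"
    unfolding poly_dehomogenize sum_distrib_left
  proof (rule sum.cong)
    fix m assume "m \<in> Poly_Mapping.keys p"
    then have "a1 ^ k = a1 ^ Poly_Mapping.lookup m X0 * a1 ^ (k - Poly_Mapping.lookup m X0)"
      using keys_x_form[OF assms(1)] by (simp flip: power_add)
    then show "a1 ^ k * (Poly_Mapping.lookup p m * (a0 / a1) ^ Poly_Mapping.lookup m X0) =
        Poly_Mapping.lookup p m * a0 ^ Poly_Mapping.lookup m X0 *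
          a1 ^ (k - Poly_Mapping.lookup m X0)"
      using assms(3) by (simp add: power_divide field_simps)
  qed simp
  also have "\<dots> = 0"
    using eval_poly4_point_ideal[OF assms(2)] eval_point_x_form[OF assms(1)] by simp
  finally show ?thesis
    using assms(3) by simp
qed

lemma coeff_dehomogenize_point_ideal:
  assumes "x_form k p" "p \<in> point_ideal ((a0, 0), b)" "a0 \<noteq> 0"
  shows "coeff (dehomogenize p) k = 0"
proof -
  have "a0 ^ k * coeff (dehomogenize p) k =
      (\<Sum>m\<in>Poly_Mapping.keys p. Poly_Mapping.lookup p m * a0 ^ Poly_Mapping.lookup m X0 *
        0 ^ (k - Poly_Mapping.lookup m X0))"
    unfolding coeff_dehomogenize sum_distrib_left
  proof (rule sum.cong)
    fix m assume "m \<in> Poly_Mapping.keys p"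
    then have "Poly_Mapping.lookup m X0 \<le> k"
      using keys_x_form[OF assms(1)] by blast
    then show "a0 ^ k * (if Poly_Mapping.lookup m X0 = k then Poly_Mapping.lookup p m else 0) =
        Poly_Mapping.lookup p m * a0 ^ Poly_Mapping.lookup m X0 *
          0 ^ (k - Poly_Mapping.lookup m X0)"
      by auto
  qed simp
  also have "\<dots> = 0"
    using eval_poly4_point_ideal[OF assms(2)] eval_point_x_form[OF assms(1)] by simp
  finally show ?thesis
    using assms(3) by simp
qed

section \<open>The first coordinates of a set of points\<close>

definition affine_x_coords :: "((complex \<times> complex) \<times> (complex \<times> complex)) set \<Rightarrow> complex set" where
  "affine_x_coords Y = {a0 / a1 | a0 a1 b. ((a0, a1), b) \<in> Y \<and> a1 \<noteq> 0}"

definition x_coord_at_infinity :: "((complex \<times> complex) \<times> (complex \<times> complex)) set \<Rightarrow> bool" where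
  "x_coord_at_infinity Y \<longleftrightarrow> (\<exists>a0 b. ((a0, 0), b) \<in> Y)"

definition num_x_coords :: "((complex \<times> complex) \<times> (complex \<times> complex)) set \<Rightarrow> nat" where
  "num_x_coords Y = card (affine_x_coords Y) + (if x_coord_at_infinity Y then 1 else 0)"

definition x_coords_form :: "((complex \<times> complex) \<times> (complex \<times> complex)) set \<Rightarrow> poly4" where
  "x_coords_form Y = (\<Prod>\<alpha>\<in>affine_x_coords Y. Var X0 - Const \<alpha> * Var X1) *
     (if x_coord_at_infinity Y then Var X1 else 1)"

lemma finite_affine_x_coords: "finite Y \<Longrightarrow> finite (affine_x_coords Y)"
proof -
  assume "finite Y"
  moreover have "affine_x_coords Y \<subseteq> (\<lambda>((a0, a1), b). a0 / a1) ` Y"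
    unfolding affine_x_coords_def by force
  ultimately show ?thesis
    by (meson finite_imageI finite_subset)
qed

lemma x_coords_form_in_point_ideal:
  assumes "finite Y" "P \<in> Y" "valid_point P"
  shows "x_coords_form Y \<in> point_ideal P"
proof -
  obtain a0 a1 b0 b1 where P: "P = ((a0, a1), (b0, b1))"
    by (metis prod.collapse)
  let ?l = "Const a1 * Var X0 - Const a0 * Var X1"
  have "?l dvd x_coords_form Y"
  proof (cases "a1 = 0")
    case True
    then have "a0 \<noteq> 0" "x_coord_at_infinity Y"
      using assms(2,3) P by (auto simp: valid_point_def x_coord_at_infinity_def)
    have "?l * Const (- 1 / a0) = (Const (- 1 / a0) * Const (- a0)) * Var X1"
      using True by (simp add: Const_uminus algebra_simps)
    also have "\<dots> = Var X1"
      using \<open>a0 \<noteq> 0\<close> by (simp add: Const_mult)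
    finally have "Var X1 = ?l * Const (- 1 / a0)" ..
    then have "?l dvd Var X1" ..
    then show ?thesis
      unfolding x_coords_form_def using \<open>x_coord_at_infinity Y\<close> by simp
  next
    case False
    then have \<alpha>: "a0 / a1 \<in> affine_x_coords Y"
      using assms(2) P unfolding affine_x_coords_def by blast
    have "?l * Const (1 / a1) =
        (Const (1 / a1) * Const a1) * Var X0 - (Const (1 / a1) * Const a0) * Var X1"
      by (simp add: algebra_simps)
    also have "\<dots> = Var X0 - Const (a0 / a1) * Var X1"
      using False by (simp add: Const_mult)
    finally have "Var X0 - Const (a0 / a1) * Var X1 = ?l * Const (1 / a1)" ..
    then have "?l dvd Var X0 - Const (a0 / a1) * Var X1" ..
    also have "\<dots> dvd (\<Prod>\<alpha>\<in>affine_x_coords Y. Var X0 - Const \<alpha> * Var X1)"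
      using finite_affine_x_coords[OF assms(1)] \<alpha> by (rule dvd_prodI)
    finally show ?thesis
      unfolding x_coords_form_def by (rule dvd_mult2)
  qed
  then obtain r where "x_coords_form Y = r * ?l"
    by (auto elim!: dvdE simp: mult.commute)
  then show ?thesis
    unfolding P point_ideal_def by (auto intro: ideal_gen_mult_generator)
qed

lemma x_coords_form_in_points_ideal:
  "finite Y \<Longrightarrow> \<forall>P\<in>Y. valid_point P \<Longrightarrow> x_coords_form Y \<in> points_ideal Y"
  unfolding points_ideal_def by (auto intro: x_coords_form_in_point_ideal)

lemma x_form_x_coords_form: "finite Y \<Longrightarrow> x_form (num_x_coords Y) (x_coords_form Y)"
proof -
  have linear: "x_form 1 (Var X0 - Const \<alpha> * Var X1)" for \<alpha>
  proof -
    have "x_form 1 (Var X0)" "x_form (0 + 1) (Const \<alpha> * Var X1)"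
      by (intro x_form_mult x_form_Const x_form_Var; simp)+
    then show ?thesis
      by (simp add: x_form_diff)
  qed
  assume "finite Y"
  then have "x_form (\<Sum>\<alpha>\<in>affine_x_coords Y. 1) (\<Prod>\<alpha>\<in>affine_x_coords Y. Var X0 - Const \<alpha> * Var X1)"
    by (intro x_form_prod linear finite_affine_x_coords)
  then show ?thesis
    unfolding x_coords_form_def num_x_coords_def
    using x_form_mult x_form_Var[of X1] x_form_one by fastforce
qed

lemma dehomogenize_x_coords_form:
  "dehomogenize (x_coords_form Y) = (\<Prod>\<alpha>\<in>affine_x_coords Y. [:- \<alpha>, 1:])"
  by (simp add: x_coords_form_def dehomogenize_def eval_poly4_mult eval_poly4_prod eval_poly4_diff)

lemma x_coords_form_nonzero: "finite Y \<Longrightarrow> x_coords_form Y \<noteq> 0"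
  using dehomogenize_x_coords_form[of Y] by (auto simp: finite_affine_x_coords prod_zero_iff)

lemma prod_linear_factors_dvd:
  assumes "finite A" "\<forall>\<alpha>\<in>A. poly q \<alpha> = 0"
  shows "(\<Prod>\<alpha>\<in>A. [:- \<alpha>, 1:]) dvd (q :: 'a::idom poly)"
  using assms
proof (induction A arbitrary: q rule: finite_induct)
  case (insert \<beta> A)
  then obtain r where r: "q = [:- \<beta>, 1:] * r"
    by (metis dvdE insertI1 poly_eq_0_iff_dvd)
  have "\<forall>\<alpha>\<in>A. poly r \<alpha> = 0"
    using insert.hyps(2) insert.prems r by auto
  then have "(\<Prod>\<alpha>\<in>A. [:- \<alpha>, 1:]) dvd r"
    by (rule insert.IH)
  then show ?case
    unfolding r prod.insert[OF insert.hyps] by (rule mult_dvd_mono[OF dvd_refl])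
qed simp

lemma dehomogenize_x_form_in_points_ideal:
  assumes Y: "finite Y" "\<forall>P\<in>Y. valid_point P"
    and p: "p \<in> points_ideal Y" "x_form d p" "p \<noteq> 0"
  obtains q where "dehomogenize p = (\<Prod>\<alpha>\<in>affine_x_coords Y. [:- \<alpha>, 1:]) * q"
    "q \<noteq> 0" "num_x_coords Y + degree q \<le> d"
proof -
  have in_point_ideal: "p \<in> point_ideal P" if "P \<in> Y" for P
    using p(1) that unfolding points_ideal_def by blast
  have "\<forall>\<alpha>\<in>affine_x_coords Y. poly (dehomogenize p) \<alpha> = 0"
    unfolding affine_x_coords_def
    using in_point_ideal poly_dehomogenize_point_ideal[OF p(2)] by blast
  then have "(\<Prod>\<alpha>\<in>affine_x_coords Y. [:- \<alpha>, 1:]) dvd dehomogenize p"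
    by (rule prod_linear_factors_dvd[OF finite_affine_x_coords[OF Y(1)]])
  then obtain q where q: "dehomogenize p = (\<Prod>\<alpha>\<in>affine_x_coords Y. [:- \<alpha>, 1:]) * q"
    by (elim dvdE)
  have "dehomogenize p \<noteq> 0"
    using dehomogenize_x_form_inject[OF p(2) x_form_zero] p(3) by auto
  then have "q \<noteq> 0" and degree: "degree (dehomogenize p) = card (affine_x_coords Y) + degree q"
    using q finite_affine_x_coords[OF Y(1)] by (auto simp: degree_mult_eq degree_prod_eq_sum_degree)
  moreover have "degree (dehomogenize p) < d" if infinity: "x_coord_at_infinity Y"
  proof -
    obtain a0 b where P: "((a0, 0), b) \<in> Y"
      using infinity unfolding x_coord_at_infinity_def by blast
    then have "a0 \<noteq> 0"
      using Y(2) by (auto simp: valid_point_def)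
    then have "coeff (dehomogenize p) d = 0"
      using coeff_dehomogenize_point_ideal[OF p(2) in_point_ideal[OF P]] by blast
    then show ?thesis
      using degree_dehomogenize_x_form[OF p(2)] \<open>dehomogenize p \<noteq> 0\<close>
      by (metis le_neq_implies_less leading_coeff_0_iff)
  qed
  ultimately show ?thesis
    using that q degree_dehomogenize_x_form[OF p(2)] unfolding num_x_coords_def by fastforce
qed

lemma x_form_of_least_degree_dvd:
  assumes Y: "finite Y" "\<forall>P\<in>Y. valid_point P"
    and f: "f \<in> points_ideal Y" "x_form k f" "f \<noteq> 0" "k \<le> num_x_coords Y"
    and h: "h \<in> points_ideal Y" "x_form e h"
  shows "f dvd h"
proof (cases "h = 0")
  case False
  obtain qf where qf: "dehomogenize f = (\<Prod>\<alpha>\<in>affine_x_coords Y. [:- \<alpha>, 1:]) * qf"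
    "qf \<noteq> 0" "num_x_coords Y + degree qf \<le> k"
    using dehomogenize_x_form_in_points_ideal[OF Y f(1-3)] .
  obtain qh where qh: "dehomogenize h = (\<Prod>\<alpha>\<in>affine_x_coords Y. [:- \<alpha>, 1:]) * qh"
    "num_x_coords Y + degree qh \<le> e"
    using dehomogenize_x_form_in_points_ideal[OF Y h False] .
  have "k = num_x_coords Y" "degree qf = 0"
    using qf(3) f(4) by auto
  then obtain c where c: "qf = [:c:]" "c \<noteq> 0"
    using qf(2) by (metis degree_eq_zeroE pCons_eq_0_iff)
  define r where "r = homogenize (e - k) (smult (1 / c) qh)"
  have "x_form (k + (e - k)) (f * r)"
    unfolding r_def using f(2) x_form_homogenize by (rule x_form_mult)
  moreover have "k \<le> e"
    using qh(2) \<open>k = num_x_coords Y\<close> by simp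
  ultimately have "x_form e (f * r)"
    by simp
  moreover have "dehomogenize r = smult (1 / c) qh"
    unfolding r_def using qh(2) \<open>k = num_x_coords Y\<close> by (intro dehomogenize_homogenize) auto
  then have "dehomogenize (f * r) = dehomogenize h"
    using qf(1) qh(1) c by (simp add: dehomogenize_mult)
  ultimately have "h = f * r"
    using dehomogenize_x_form_inject h(2) by metis
  then show ?thesis ..
qed simp

section \<open>Generators of bidegree (k, 0)\<close>

lemma bihomogeneous_generator_x_form:
  assumes "f \<in> ideal_gen S" "\<forall>g\<in>S. bihomogeneous g"
    and "m \<in> Poly_Mapping.keys f" "bideg m = (n, 0)"
  obtains g k where "g \<in> S" "g \<noteq> 0" "k \<le> n" "x_form k g"
proof -
  obtain F c where F: "f = (\<Sum>g\<in>F. c g * g)" "F \<subseteq> S"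
    using assms(1) unfolding ideal_gen_def by blast
  then obtain g where g: "g \<in> F" "m \<in> Poly_Mapping.keys (c g * g)"
    using assms(3) keys_sum[of "\<lambda>g. c g * g" F] by blast
  then obtain a b where "m = a + b" "b \<in> Poly_Mapping.keys g"
    using keys_mult[of "c g" g] by blast
  then have b: "bideg b = (fst (bideg b), 0)" "fst (bideg b) \<le> n"
    using assms(4) by (auto simp: bideg_add prod_eq_iff)
  obtain d where "\<forall>m'\<in>Poly_Mapping.keys g. bideg m' = d"
    using assms(2) g(1) F(2) unfolding bihomogeneous_def by blast
  then have "x_form (fst (bideg b)) g"
    unfolding x_form_def using \<open>b \<in> Poly_Mapping.keys g\<close> b(1) by metis
  moreover have "g \<noteq> 0"
    using \<open>b \<in> Poly_Mapping.keys g\<close> by auto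
  ultimately show ?thesis
    using that g(1) F(2) b(2) by blast
qed

lemma points_ideal_generator_x_form:
  assumes "ideal_gen S = points_ideal Y" "finite Y" "\<forall>P\<in>Y. valid_point P"
    and "\<forall>g\<in>S. bihomogeneous g"
  obtains g k where "g \<in> S" "g \<noteq> 0" "k \<le> num_x_coords Y" "x_form k g"
proof -
  obtain m where "m \<in> Poly_Mapping.keys (x_coords_form Y)"
    using x_coords_form_nonzero[OF assms(2)] by fastforce
  moreover from this have "bideg m = (num_x_coords Y, 0)"
    using x_form_x_coords_form[OF assms(2)] unfolding x_form_def by blast
  moreover have "x_coords_form Y \<in> ideal_gen S"
    using x_coords_form_in_points_ideal[OF assms(2,3)] assms(1) by simp
  ultimately show ?thesis
    using bihomogeneous_generator_x_form assms(4) that by blast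
qed

lemma is_points_ideal_generator_x_form:
  assumes "is_points_ideal (ideal_gen S)" "\<forall>g\<in>S. bihomogeneous g"
  shows "\<exists>g\<in>S. \<exists>k. x_form k g"
proof -
  obtain Y where Y: "finite Y" "\<forall>P\<in>Y. valid_point P" "ideal_gen S = points_ideal Y"
    using assms(1) unfolding is_points_ideal_def by blast
  obtain g k where "g \<in> S" "g \<noteq> 0" "k \<le> num_x_coords Y" "x_form k g"
    by (rule points_ideal_generator_x_form[OF Y(3,1,2) assms(2)])
  then show ?thesis
    by blast
qed

lemma minimal_generators_x_form_unique:
  assumes X: "finite X" "\<forall>P\<in>X. valid_point P"
    and G: "minimal_bihom_generators G (points_ideal X)"
    and "g \<in> G" "x_form k g" "h \<in> G" "x_form l h"
  shows "g = h"
proof -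
  have gen: "\<forall>g\<in>G. bihomogeneous g" "ideal_gen G = points_ideal X"
    "\<And>H. H \<subset> G \<Longrightarrow> ideal_gen H \<noteq> points_ideal X"
    using G unfolding minimal_bihom_generators_def by auto
  obtain f d where f: "f \<in> G" "f \<noteq> 0" "d \<le> num_x_coords X" "x_form d f"
    using points_ideal_generator_x_form[OF gen(2) X gen(1)] .
  have unique: "g' = f" if g': "g' \<in> G" "x_form k' g'" for g' k'
  proof (rule ccontr)
    assume "g' \<noteq> f"
    have "f \<in> points_ideal X" "g' \<in> points_ideal X"
      using f(1) g'(1) gen(2) generator_in_ideal_gen by blast+
    then have "f dvd g'"
      by (rule x_form_of_least_degree_dvd[OF X _ f(4,2,3) _ g'(2)])
    then have "ideal_gen (G - {g'}) = points_ideal X"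
      using ideal_gen_Diff_multiple[OF f(1) g'(1)] \<open>g' \<noteq> f\<close> gen(2) by simp
    then show False
      using gen(3) g'(1) by blast
  qed
  show ?thesis
    using unique[OF assms(4,5)] unique[OF assms(6,7)] by simp
qed

theorem lemma3p1:
  fixes X :: "((complex \<times> complex) \<times> (complex \<times> complex)) set"
    and G :: "poly4 set"
  assumes "finite X" and "X \<noteq> {}" and "\<forall>P\<in>X. valid_point P"
    and "minimal_bihom_generators G (points_ideal X)"
  shows "\<not> (\<exists>A B. A \<union> B = G \<and> A \<inter> B = {} \<and> A \<noteq> {} \<and> B \<noteq> {} \<and>
              is_points_ideal (ideal_gen A) \<and> is_points_ideal (ideal_gen B))"
proof
  assume "\<exists>A B. A \<union> B = G \<and> A \<inter> B = {} \<and> A \<noteq> {} \<and> B \<noteq> {} \<and>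
              is_points_ideal (ideal_gen A) \<and> is_points_ideal (ideal_gen B)"
  then obtain A B where AB: "A \<union> B = G" "A \<inter> B = {}"
    "is_points_ideal (ideal_gen A)" "is_points_ideal (ideal_gen B)"
    by blast
  have "A \<subseteq> G" "B \<subseteq> G"
    using AB(1) by blast+
  moreover have "\<forall>g\<in>G. bihomogeneous g"
    using assms(4) unfolding minimal_bihom_generators_def by blast
  ultimately obtain a b k l where "a \<in> A" "x_form k a" "b \<in> B" "x_form l b"
    using is_points_ideal_generator_x_form AB(3,4) by (metis subset_iff)
  then have "a = b"
    using minimal_generators_x_form_unique[OF assms(1,3,4)] \<open>A \<subseteq> G\<close> \<open>B \<subseteq> G\<close> by blast
  then show False
    using \<open>a \<in> A\<close> \<open>b \<in> B\<close> AB(2) by blast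
qed

end
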